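(* Let $p,q,r$ be probability distributions on a finite alphabet $\mathcal{X}$ and let $\mu_q=\min_{x\in\mathcal{X}}q(x)$. Then $$\mathbb{D}(p\|q)\le\log\Big(\frac1{\mu_q}\Big)\sqrt{2\ln2}\Big[\sqrt{\min(\mathbb{D}(p\|r),\mathbb{D}(r\|p))}+\sqrt{\min(\mathbb{D}(q\|r),\mathbb{D}(r\|q))}\Big].$$
   Context: $\log$ is base 2 and $\ln$ is the natural logarithm; $\mathbb{D}(p\|q)=\sum_xp(x)\log\frac{p(x)}{q(x)}$ is the Kullback–Leibler divergence, with the convention $\mathbb{D}(p\|q)=+\infty$ if $p(x)>0=q(x)$ for some $x$ (the inequality being trivial when some quantity is infinite). *)

theory Defs
  imports "HOL-Analysis.Analysis" "HOL-Library.Extended_Real"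
begin

definition is_distr :: "('a::finite \<Rightarrow> real) \<Rightarrow> bool" where
  "is_distr p \<longleftrightarrow> (\<forall>x. p x \<ge> 0) \<and> (\<Sum>x\<in>UNIV. p x) = 1"

definition KL :: "('a::finite \<Rightarrow> real) \<Rightarrow> ('a \<Rightarrow> real) \<Rightarrow> ereal" where
  "KL p q = (if \<exists>x. p x > 0 \<and> q x = 0 then \<infinity>
             else ereal (\<Sum>x\<in>UNIV. if p x = 0 then 0 else p x * log 2 (p x / q x)))"

definition esqrt :: "ereal \<Rightarrow> ereal" where
  "esqrt t = (if t = \<infinity> then \<infinity> else ereal (sqrt (real_of_ereal t)))"

definition elog_inv :: "real \<Rightarrow> ereal" where
  "elog_inv m = (if m = 0 then \<infinity> else ereal (log 2 (1 / m)))"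

end

theory Submission
  imports Defs
begin

text \<open>
  If \<open>p x > q x\<close>, then \<open>q x \<le> 1 - \<mu>\<close>, and the chord bound for the convex function
  \<open>s \<mapsto> s ln (s / q x)\<close> on \<open>[q x, 1]\<close> gives \<open>p x ln (p x / q x) \<le> 2 ln (1/\<mu>) (p x - q x)\<close>;
  the terms with \<open>p x \<le> q x\<close> are nonpositive. Summing, with \<open>\<Sum>(p - q) = 0\<close>, yields
  \<open>D(p\<parallel>q) \<le> log (1/\<mu>) \<parallel>p - q\<parallel>\<^sub>1\<close>. The triangle inequality through \<open>r\<close> and Pinsker's
  inequality \<open>\<parallel>p - r\<parallel>\<^sub>1 \<le> \<surd>(2 ln 2 D(p\<parallel>r))\<close>, applied in whichever direction has the smaller
  divergence, finish the proof. Pinsker's inequality is reduced by the log-sum inequality to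
  two-point distributions, where it is a one-variable calculus fact.
\<close>

section \<open>Elementary logarithm inequalities\<close>

lemma minus_ln_one_minus_le:
  fixes u :: real
  assumes "0 < u" "u \<le> 1/2"
  shows "- ln (1 - u) \<le> 2 * u * ln (1 / u)"
proof -
  define g where "g = (\<lambda>v::real. 2 * ln v - ln (1 - v) / v)"
  define g' where "g' = (\<lambda>v::real. 2 / v - ((- 1 / (1 - v)) * v - ln (1 - v)) / v^2)"
  have deriv: "(g has_real_derivative g' v) (at v)" if "v \<in> {u..1/2}" for v
  proof -
    from that assms have v: "0 < v" "v < 1" by auto
    show ?thesis unfolding g_def g'_def
      by (rule derivative_eq_intros refl | use v in \<open>auto simp: power2_eq_square\<close>)+
  qed
  have "g' v \<ge> 0" if "v \<in> {u..1/2}" for v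
  proof -
    from that assms have v: "0 < v" "v < 1" by auto
    have "ln (1 / (1 - v)) \<le> 1 / (1 - v) - 1" using v by (intro ln_le_minus_one) auto
    then have "(- 1 / (1 - v)) * v - ln (1 - v) \<le> 0" using v by (simp add: ln_div field_simps)
    then have "((- 1 / (1 - v)) * v - ln (1 - v)) / v^2 \<le> 0" using v by (intro divide_nonpos_pos) auto
    moreover have "0 \<le> 2 / v" using v by simp
    ultimately show ?thesis unfolding g'_def by linarith
  qed
  then have "g u \<le> g (1/2)" by (intro deriv_nonneg_imp_mono[OF deriv]) (use assms in auto)
  also have "g (1/2) = 0" unfolding g_def by (simp add: ln_div)
  finally have "2 * ln u * u - ln (1 - u) \<le> 0" unfolding g_def using assms by (simp add: field_simps)
  then show ?thesis using assms by (simp add: ln_div algebra_simps)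
qed

lemma mul_ln_div_le_chord:
  fixes p q :: real
  assumes "0 < q" "q < p" "p \<le> 1"
  shows "p * ln (p / q) \<le> (p - q) * (ln (1 / q) / (1 - q))"
proof -
  define G where "G = (\<lambda>s::real. s * (ln s - ln q) / (s - q))"
  define G' where "G' = (\<lambda>s::real. ((s - q) - q * (ln s - ln q)) / (s - q)^2)"
  have deriv: "(G has_real_derivative G' s) (at s)" if "s \<in> {p..1}" for s
  proof -
    from that assms have s: "q < s" "0 < s" by auto
    have "(G has_real_derivative
            (((1 * (ln s - ln q) + s * (1/s)) * (s - q) - s * (ln s - ln q) * 1) / (s - q)^2)) (at s)"
      unfolding G_def
      by (rule derivative_eq_intros refl | use s in \<open>auto simp: power2_eq_square\<close>)+
    also have "((1 * (ln s - ln q) + s * (1/s)) * (s - q) - s * (ln s - ln q) * 1) / (s - q)^2 = G' s"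
      unfolding G'_def using s by (simp add: field_simps)
    finally show ?thesis .
  qed
  have "G' s \<ge> 0" if "s \<in> {p..1}" for s
  proof -
    from that assms have s: "q < s" "0 < s" by auto
    have "ln (s / q) \<le> s / q - 1" using s assms by (intro ln_le_minus_one) auto
    then have "0 \<le> (s - q) - q * (ln s - ln q)" using s assms by (simp add: ln_div field_simps)
    then show ?thesis unfolding G'_def by simp
  qed
  then have "G p \<le> G 1" by (intro deriv_nonneg_imp_mono[OF deriv]) (use assms in auto)
  then have "p * (ln p - ln q) \<le> (p - q) * (ln (1 / q) / (1 - q))"
    unfolding G_def using assms by (simp add: ln_div field_simps)
  then show ?thesis using assms by (simp add: ln_div)
qed

lemma ln_inverse_div_one_minus_le:
  fixes q m :: real
  assumes "0 < m" "m \<le> q" "m \<le> 1 - q"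
  shows "ln (1 / q) / (1 - q) \<le> 2 * ln (1 / m)"
proof (cases "q \<le> 1/2")
  case True
  have "ln (1 / q) / (1 - q) \<le> 2 * ln (1 / q)"
    using True assms by (simp add: field_simps)
  also have "\<dots> \<le> 2 * ln (1 / m)" using assms by (simp add: ln_div)
  finally show ?thesis .
next
  case False
  then have "- ln (1 - (1 - q)) \<le> 2 * (1 - q) * ln (1 / (1 - q))"
    using assms by (intro minus_ln_one_minus_le) auto
  then have "ln (1 / q) / (1 - q) \<le> 2 * ln (1 / (1 - q))"
    using False assms by (simp add: ln_div field_simps)
  also have "\<dots> \<le> 2 * ln (1 / m)" using False assms by (simp add: ln_div)
  finally show ?thesis .
qed

lemma mul_ln_div_le_twice_ln_inverse:
  fixes p q m :: real
  assumes "0 < m" "m \<le> q" "m \<le> 1 - q" "q < p" "p \<le> 1"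
  shows "p * ln (p / q) \<le> 2 * ln (1 / m) * (p - q)"
proof -
  have "p * ln (p / q) \<le> (p - q) * (ln (1 / q) / (1 - q))"
    using assms by (intro mul_ln_div_le_chord) auto
  also have "\<dots> \<le> (p - q) * (2 * ln (1 / m))"
    using assms by (intro mult_left_mono ln_inverse_div_one_minus_le) auto
  finally show ?thesis by (simp add: mult.commute)
qed

section \<open>Pinsker's inequality\<close>

definition binary_kl :: "real \<Rightarrow> real \<Rightarrow> real" where
  "binary_kl P R = P * ln (P / R) + (1 - P) * ln ((1 - P) / (1 - R))"

lemma has_real_derivative_mul_ln_div:
  fixes P b :: real
  assumes "P = 0 \<or> 0 < b"
  shows "((\<lambda>b. P * ln (P / b)) has_real_derivative - P / b) (at b)"
proof (cases "P = 0")
  case False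
  with assms have b: "0 < b" by auto
  have "((\<lambda>b. P * ln P - P * ln b) has_real_derivative - P / b) (at b)"
    using b by (auto intro!: derivative_eq_intros simp: field_simps)
  then show ?thesis
  proof (rule has_field_derivative_transform_within_open[where S="{0<..}"])
    show "P * ln P - P * ln x = P * ln (P / x)" if "x \<in> {0<..}" for x
      using False that by (simp add: ln_div algebra_simps)
  qed (use b in auto)
qed simp

lemma binary_kl_minus_square_has_derivative:
  fixes P b :: real
  assumes "P = 0 \<or> 0 < b" "P = 1 \<or> b < 1"
  shows "((\<lambda>b. binary_kl P b - 2 * (P - b)^2) has_real_derivative
           - P / b + (1 - P) / (1 - b) + 4 * (P - b)) (at b)"
proof -
  have "((\<lambda>b. (1 - P) * ln ((1 - P) / b)) has_real_derivative - (1 - P) / (1 - b)) (at (1 - b))"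
    using assms(2) by (intro has_real_derivative_mul_ln_div) auto
  moreover have "((\<lambda>b. 1 - b) has_real_derivative - 1) (at b)"
    by (auto intro!: derivative_eq_intros)
  ultimately have right: "((\<lambda>b. (1 - P) * ln ((1 - P) / (1 - b))) has_real_derivative (1 - P) / (1 - b)) (at b)"
    using DERIV_chain2 by fastforce
  have "((\<lambda>b. binary_kl P b - 2 * (P - b)^2) has_real_derivative
          - P / b + (1 - P) / (1 - b) - 2 * (2 * (P - b) * (0 - 1))) (at b)"
    unfolding binary_kl_def
    by (rule derivative_eq_intros has_real_derivative_mul_ln_div right assms refl | simp)+
  then show ?thesis by (simp add: algebra_simps)
qed

lemma binary_kl_derivative_factor:
  fixes P b :: real
  assumes "0 < b" "b < 1"
  shows "- P / b + (1 - P) / (1 - b) + 4 * (P - b) = (b - P) * (1 - 2 * b)^2 / (b * (1 - b))"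
  using assms by (simp add: field_simps power2_eq_square)

text \<open>
  The derivative in \<open>R\<close> of \<open>binary_kl P R - 2 (P - R)\<^sup>2\<close> has the sign of \<open>R - P\<close>, so the
  minimum \<open>0\<close> is attained at \<open>R = P\<close>.
\<close>

lemma binary_pinsker:
  fixes P R :: real
  assumes "0 \<le> P" "P \<le> 1" "0 \<le> R" "R \<le> 1" "0 < P \<Longrightarrow> 0 < R" "P < 1 \<Longrightarrow> R < 1"
  shows "2 * (P - R)^2 \<le> binary_kl P R"
proof -
  define f where "f = (\<lambda>b. binary_kl P b - 2 * (P - b)^2)"
  define f' where "f' = (\<lambda>b. - P / b + (1 - P) / (1 - b) + 4 * (P - b))"
  have deriv: "(f has_real_derivative f' b) (at b)" if "P = 0 \<or> 0 < b" "P = 1 \<or> b < 1" for b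
    unfolding f_def f'_def using that by (rule binary_kl_minus_square_has_derivative)
  have "f P = 0" unfolding f_def binary_kl_def by (cases "P = 0"; cases "P = 1") auto
  moreover have "f P \<le> f R"
  proof (cases "P < R")
    case True
    with assms have "R < 1" by force
    have "f' b \<ge> 0" if "b \<in> {P..R}" for b
    proof (cases "b = 0")
      case False
      with that assms \<open>R < 1\<close> have "0 < b" "b < 1" by auto
      then show ?thesis using that
        unfolding f'_def by (subst binary_kl_derivative_factor) (auto intro!: divide_nonneg_pos)
    qed (use that assms in \<open>auto simp: f'_def\<close>)
    then show ?thesis
      using assms \<open>R < 1\<close> True by (intro deriv_nonneg_imp_mono[of P R f f'] deriv) auto
  next
    case False
    with assms have "0 < R \<or> R = P" by force
    have "- f' b \<ge> 0" if "b \<in> {R..P}" "R < P" for b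
    proof (cases "b = 1")
      case False
      with that assms \<open>0 < R \<or> R = P\<close> have "0 < b" "b < 1" by auto
      then have "f' b \<le> 0" using that
        unfolding f'_def by (subst binary_kl_derivative_factor) (auto intro!: divide_nonpos_pos mult_nonpos_nonneg)
      then show ?thesis by simp
    qed (use that assms in \<open>auto simp: f'_def\<close>)
    then have "- f R \<le> - f P" if "R < P"
      using assms that by (intro deriv_nonneg_imp_mono[of R P "\<lambda>b. - f b" "\<lambda>b. - f' b"]
          derivative_intros deriv) auto
    then show ?thesis using False by force
  qed
  ultimately show ?thesis unfolding f_def by simp
qed

lemma log_sum_inequality:
  fixes a b :: "'a \<Rightarrow> real"
  assumes "finite B" and nonneg: "\<And>i. i \<in> B \<Longrightarrow> 0 \<le> a i" "\<And>i. i \<in> B \<Longrightarrow> 0 \<le> b i"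
    and pos: "\<And>i. i \<in> B \<Longrightarrow> 0 < a i \<Longrightarrow> 0 < b i"
  shows "(\<Sum>i\<in>B. a i) * ln ((\<Sum>i\<in>B. a i) / (\<Sum>i\<in>B. b i)) \<le> (\<Sum>i\<in>B. a i * ln (a i / b i))"
proof (cases "\<forall>i\<in>B. a i = 0")
  case False
  define A where "A = (\<Sum>i\<in>B. a i)"
  define C where "C = (\<Sum>i\<in>B. b i)"
  obtain j where j: "j \<in> B" "0 < a j" using False nonneg by (auto simp: order_less_le)
  have "0 < A" unfolding A_def using j nonneg \<open>finite B\<close> by (intro sum_pos2) auto
  have "0 < C" unfolding C_def using j nonneg pos \<open>finite B\<close> by (intro sum_pos2) auto
  text \<open>Termwise \<open>ln x \<le> x - 1\<close> with \<open>x = (b i / a i) / (C / A)\<close>; the sums of the extra terms cancel.\<close>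
  have termwise: "a i * ln (A / C) + a i - b i * (A / C) \<le> a i * ln (a i / b i)" if i: "i \<in> B" for i
  proof (cases "a i = 0")
    case False
    then have "0 < a i" "0 < b i" using nonneg pos i by (auto simp: order_less_le)
    have "ln (b i * A / (a i * C)) \<le> b i * A / (a i * C) - 1"
      using \<open>0 < a i\<close> \<open>0 < b i\<close> \<open>0 < A\<close> \<open>0 < C\<close> by (intro ln_le_minus_one) auto
    then have "a i * (ln (A / C) - ln (a i / b i)) \<le> a i * (b i * A / (a i * C) - 1)"
      using \<open>0 < a i\<close> \<open>0 < b i\<close> \<open>0 < A\<close> \<open>0 < C\<close> by (intro mult_left_mono) (auto simp: ln_div ln_mult)
    then show ?thesis using \<open>0 < a i\<close> by (simp add: algebra_simps)
  qed (use nonneg(2)[OF i] \<open>0 < A\<close> \<open>0 < C\<close> in simp)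
  have "A * ln (A / C) = (\<Sum>i\<in>B. a i * ln (A / C) + a i - b i * (A / C))"
    using \<open>0 < C\<close> by (simp add: sum.distrib sum_subtractf flip: sum_distrib_right sum_divide_distrib)
      (simp add: A_def C_def)
  also have "\<dots> \<le> (\<Sum>i\<in>B. a i * ln (a i / b i))" by (rule sum_mono[OF termwise])
  finally show ?thesis unfolding A_def C_def .
qed simp

lemma is_distr_nonneg: "is_distr p \<Longrightarrow> 0 \<le> p x"
  by (simp add: is_distr_def)

lemma is_distr_sum: "is_distr p \<Longrightarrow> (\<Sum>x\<in>UNIV. p x) = 1"
  by (simp add: is_distr_def)

lemma is_distr_sum_compl: "is_distr p \<Longrightarrow> (\<Sum>x\<in>- A. p x) = 1 - (\<Sum>x\<in>A. p x)"
  using sum.subset_diff[of A UNIV p] by (simp add: is_distr_sum Compl_eq_Diff_UNIV)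

lemma is_distr_sum_le_one: "is_distr p \<Longrightarrow> (\<Sum>x\<in>A. p x) \<le> 1"
  using sum_mono2[of UNIV A p] by (simp add: is_distr_nonneg is_distr_sum)

lemma is_distr_le_one: "is_distr p \<Longrightarrow> p x \<le> 1"
  using is_distr_sum_le_one[of p "{x}"] by simp

lemma l1_dist_eq_twice_sum_pos_part:
  fixes p r :: "'a::finite \<Rightarrow> real"
  assumes "is_distr p" "is_distr r"
  defines "A \<equiv> {x. r x \<le> p x}"
  shows "(\<Sum>x\<in>UNIV. \<bar>p x - r x\<bar>) = 2 * ((\<Sum>x\<in>A. p x) - (\<Sum>x\<in>A. r x))"
proof -
  have "(\<Sum>x\<in>UNIV. \<bar>p x - r x\<bar>) = (\<Sum>x\<in>A. \<bar>p x - r x\<bar>) + (\<Sum>x\<in>- A. \<bar>p x - r x\<bar>)"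
    by (simp add: sum.subset_diff[of A UNIV] Compl_eq_Diff_UNIV)
  also have "\<dots> = (\<Sum>x\<in>A. p x - r x) + (\<Sum>x\<in>- A. r x - p x)"
    by (intro arg_cong2[where f = "(+)"] sum.cong) (auto simp: A_def)
  also have "\<dots> = 2 * ((\<Sum>x\<in>A. p x) - (\<Sum>x\<in>A. r x))"
    using assms(1,2) by (simp add: sum_subtractf is_distr_sum_compl)
  finally show ?thesis .
qed

lemma pinsker:
  fixes p r :: "'a::finite \<Rightarrow> real"
  assumes p: "is_distr p" and r: "is_distr r" and pos: "\<And>x. 0 < p x \<Longrightarrow> 0 < r x"
  shows "(\<Sum>x\<in>UNIV. \<bar>p x - r x\<bar>)^2 \<le> 2 * (\<Sum>x\<in>UNIV. p x * ln (p x / r x))"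
proof -
  define A where "A = {x. r x \<le> p x}"
  define P where "P = (\<Sum>x\<in>A. p x)"
  define R where "R = (\<Sum>x\<in>A. r x)"
  have zero_if_sum_zero: "(\<Sum>x\<in>B. r x) = 0 \<Longrightarrow> (\<Sum>x\<in>B. p x) = 0" for B
    using pos p r by (simp add: sum_nonneg_eq_0_iff is_distr_nonneg)
      (metis is_distr_nonneg less_irrefl order_less_le)
  have P: "0 \<le> P" "P \<le> 1" and R: "0 \<le> R" "R \<le> 1"
    unfolding P_def R_def using p r by (auto intro!: sum_nonneg is_distr_sum_le_one simp: is_distr_nonneg)
  have "0 < R" if "0 < P" using that R zero_if_sum_zero[of A] unfolding P_def R_def by force
  moreover have "R < 1" if "P < 1"
    using that R zero_if_sum_zero[of "- A"] p r unfolding P_def R_def by (force simp: is_distr_sum_compl)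
  ultimately have "2 * (P - R)^2 \<le> binary_kl P R" using P R by (intro binary_pinsker) auto
  also have "\<dots> \<le> (\<Sum>x\<in>A. p x * ln (p x / r x)) + (\<Sum>x\<in>- A. p x * ln (p x / r x))"
    unfolding binary_kl_def P_def R_def
      is_distr_sum_compl[OF p, symmetric] is_distr_sum_compl[OF r, symmetric]
    by (intro add_mono log_sum_inequality) (auto simp: is_distr_nonneg p r pos)
  also have "\<dots> = (\<Sum>x\<in>UNIV. p x * ln (p x / r x))"
    by (simp add: sum.subset_diff[of A UNIV] Compl_eq_Diff_UNIV)
  finally have "2 * (P - R)^2 \<le> (\<Sum>x\<in>UNIV. p x * ln (p x / r x))" .
  moreover have "(\<Sum>x\<in>UNIV. \<bar>p x - r x\<bar>) = 2 * (P - R)"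
    unfolding A_def P_def R_def by (rule l1_dist_eq_twice_sum_pos_part[OF p r])
  ultimately show ?thesis by (simp only: power_mult_distrib) simp
qed

section \<open>Divergences in bits\<close>

lemma KL_infinite: "\<not> (\<forall>x. 0 < p x \<longrightarrow> 0 < q x) \<Longrightarrow> is_distr q \<Longrightarrow> KL p q = \<infinity>"
  unfolding KL_def by (auto simp: order_less_le is_distr_nonneg)

lemma KL_eq_ln_sum:
  assumes "\<And>x. 0 < p x \<Longrightarrow> 0 < q x"
  shows "KL p q = ereal ((\<Sum>x\<in>UNIV. p x * ln (p x / q x)) / ln 2)"
proof -
  have "KL p q = ereal (\<Sum>x\<in>UNIV. if p x = 0 then 0 else p x * log 2 (p x / q x))"
    using assms unfolding KL_def by force
  also have "(\<Sum>x\<in>UNIV. if p x = 0 then 0 else p x * log 2 (p x / q x)) = (\<Sum>x\<in>UNIV. p x * ln (p x / q x) / ln 2)"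
    by (rule sum.cong) (auto simp: log_def)
  finally show ?thesis by (simp add: sum_divide_distrib)
qed

lemma KL_self: "KL p p = 0"
  unfolding KL_def by (auto intro!: sum.neutral simp: zero_ereal_def)

lemma KL_nonneg:
  assumes "is_distr p" "is_distr r"
  shows "0 \<le> KL p r"
proof (cases "\<forall>x. 0 < p x \<longrightarrow> 0 < r x")
  case True
  have "0 \<le> (\<Sum>x\<in>UNIV. \<bar>p x - r x\<bar>)^2" by simp
  also have "\<dots> \<le> 2 * (\<Sum>x\<in>UNIV. p x * ln (p x / r x))" using assms True by (intro pinsker) auto
  finally show ?thesis using True by (simp add: KL_eq_ln_sum)
qed (use assms in \<open>simp add: KL_infinite\<close>)

lemma l1_dist_le_sqrt_KL:
  assumes p: "is_distr p" and r: "is_distr r"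
  shows "ereal (\<Sum>x\<in>UNIV. \<bar>p x - r x\<bar>) \<le> ereal (sqrt (2 * ln 2)) * esqrt (KL p r)"
proof (cases "\<forall>x. 0 < p x \<longrightarrow> 0 < r x")
  case True
  define S where "S = (\<Sum>x\<in>UNIV. p x * ln (p x / r x))"
  have "(\<Sum>x\<in>UNIV. \<bar>p x - r x\<bar>) = sqrt ((\<Sum>x\<in>UNIV. \<bar>p x - r x\<bar>)^2)" by (simp add: sum_nonneg)
  also have "\<dots> \<le> sqrt (2 * S)" unfolding S_def using p r True by (intro real_sqrt_le_mono pinsker) auto
  also have "\<dots> = sqrt (2 * ln 2) * sqrt (S / ln 2)" by (simp add: real_sqrt_mult[symmetric])
  finally show ?thesis using True by (simp add: KL_eq_ln_sum esqrt_def S_def)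
qed (use r in \<open>simp add: KL_infinite esqrt_def\<close>)

lemma l1_dist_le_sqrt_min_KL:
  assumes "is_distr p" "is_distr r"
  shows "ereal (\<Sum>x\<in>UNIV. \<bar>p x - r x\<bar>) \<le> ereal (sqrt (2 * ln 2)) * esqrt (min (KL p r) (KL r p))"
  using l1_dist_le_sqrt_KL[OF assms] l1_dist_le_sqrt_KL[OF assms(2,1)]
  by (simp add: min_def abs_minus_commute)

lemma esqrt_nonneg: "0 \<le> t \<Longrightarrow> 0 \<le> esqrt t"
  unfolding esqrt_def by (auto simp: real_of_ereal_pos)

lemma is_distr_Min_range:
  assumes "is_distr q"
  shows "0 \<le> Min (range q)" "Min (range q) \<le> q x" "Min (range q) \<le> 1"
proof -
  show "0 \<le> Min (range q)" using Min_in[of "range q"] assms by (auto simp: is_distr_nonneg)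
  show "Min (range q) \<le> q x" for x by simp
  then show "Min (range q) \<le> 1" using is_distr_le_one[OF assms] order_trans by blast
qed

lemma elog_inv_nonneg: "0 \<le> m \<Longrightarrow> m \<le> 1 \<Longrightarrow> 0 \<le> elog_inv m"
  by (auto simp: elog_inv_def)

lemma sum_mul_ln_div_le_l1_dist:
  fixes p q :: "'a::finite \<Rightarrow> real"
  assumes p: "is_distr p" and q: "is_distr q" and m: "0 < m" "\<And>x. m \<le> q x"
  shows "(\<Sum>x\<in>UNIV. p x * ln (p x / q x)) \<le> ln (1 / m) * (\<Sum>x\<in>UNIV. \<bar>p x - q x\<bar>)"
proof -
  have "p x * ln (p x / q x) \<le> ln (1 / m) * (\<bar>p x - q x\<bar> + (p x - q x))" for x
  proof (cases "p x \<le> q x")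
    case True
    have "p x * ln (p x / q x) \<le> 0"
      using True m(1) m(2)[of x] is_distr_nonneg[OF p, of x] by (cases "p x = 0") (auto intro!: mult_nonneg_nonpos)
    then show ?thesis using True by simp
  next
    case False
    have "p x \<le> 1" by (rule is_distr_le_one[OF p])
    moreover have "q x = 1" if "UNIV = {x}" using is_distr_sum[OF q] unfolding that by simp
    ultimately obtain y where "y \<noteq> x" using False by fastforce
    then have "q y + q x \<le> (\<Sum>z\<in>UNIV. q z)"
      using sum_mono2[of UNIV "{x, y}" q] q by (auto simp: is_distr_nonneg)
    then have "m \<le> 1 - q x" using q m(2)[of y] by (simp add: is_distr_sum)
    then have "p x * ln (p x / q x) \<le> 2 * ln (1 / m) * (p x - q x)"
      using m False \<open>p x \<le> 1\<close> by (intro mul_ln_div_le_twice_ln_inverse) auto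
    then show ?thesis using False by (simp add: algebra_simps)
  qed
  then have "(\<Sum>x\<in>UNIV. p x * ln (p x / q x)) \<le> (\<Sum>x\<in>UNIV. ln (1 / m) * (\<bar>p x - q x\<bar> + (p x - q x)))"
    by (rule sum_mono)
  also have "\<dots> = ln (1 / m) * (\<Sum>x\<in>UNIV. \<bar>p x - q x\<bar>)"
    using p q by (simp add: sum_distrib_left[symmetric] sum.distrib sum_subtractf is_distr_sum)
  finally show ?thesis .
qed

lemma KL_le_elog_inv_l1_dist:
  assumes p: "is_distr p" and q: "is_distr q"
  shows "KL p q \<le> elog_inv (Min (range q)) * ereal (\<Sum>x\<in>UNIV. \<bar>p x - q x\<bar>)"
proof (cases "Min (range q) = 0")
  case True
  show ?thesis
  proof (cases "p = q")
    case False
    then have "0 < (\<Sum>x\<in>UNIV. \<bar>p x - q x\<bar>)"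
      by (auto simp: fun_eq_iff sum_nonneg_eq_0_iff order_less_le sum_nonneg)
    then show ?thesis using True by (simp add: elog_inv_def)
  qed (simp add: KL_self flip: zero_ereal_def)
next
  case False
  define m where "m = Min (range q)"
  have "0 < m" using False is_distr_Min_range[OF q] unfolding m_def by (simp add: order_less_le)
  moreover have "m \<le> q x" for x unfolding m_def by (rule is_distr_Min_range(2)[OF q])
  ultimately have "KL p q = ereal ((\<Sum>x\<in>UNIV. p x * ln (p x / q x)) / ln 2)"
    by (intro KL_eq_ln_sum) (meson less_le_trans)
  also have "\<dots> \<le> ereal (ln (1 / m) * (\<Sum>x\<in>UNIV. \<bar>p x - q x\<bar>) / ln 2)"
    using sum_mul_ln_div_le_l1_dist[OF p q \<open>0 < m\<close> \<open>\<And>x. m \<le> q x\<close>] by (simp add: divide_right_mono)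
  also have "\<dots> = elog_inv m * ereal (\<Sum>x\<in>UNIV. \<bar>p x - q x\<bar>)"
    using \<open>0 < m\<close> by (simp add: elog_inv_def log_def)
  finally show ?thesis unfolding m_def .
qed

theorem lemma16:
  fixes p q r :: "'a::finite \<Rightarrow> real"
  assumes "is_distr p" and "is_distr q" and "is_distr r"
  shows "KL p q \<le> elog_inv (Min (range q)) * ereal (sqrt (2 * ln 2)) *
           (esqrt (min (KL p r) (KL r p)) + esqrt (min (KL q r) (KL r q)))"
proof -
  define E where "E = elog_inv (Min (range q))"
  define c where "c = ereal (sqrt (2 * ln 2))"
  define a where "a = esqrt (min (KL p r) (KL r p))"
  define b where "b = esqrt (min (KL q r) (KL r q))"
  have "0 \<le> E" unfolding E_def using is_distr_Min_range[OF assms(2)] by (intro elog_inv_nonneg)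
  have "0 \<le> a" "0 \<le> b" unfolding a_def b_def using KL_nonneg assms by (auto intro!: esqrt_nonneg)
  have "(\<Sum>x\<in>UNIV. \<bar>p x - q x\<bar>) \<le> (\<Sum>x\<in>UNIV. \<bar>p x - r x\<bar>) + (\<Sum>x\<in>UNIV. \<bar>q x - r x\<bar>)"
    unfolding sum.distrib[symmetric] by (rule sum_mono) linarith
  then have "KL p q \<le> E * (ereal (\<Sum>x\<in>UNIV. \<bar>p x - r x\<bar>) + ereal (\<Sum>x\<in>UNIV. \<bar>q x - r x\<bar>))"
    using KL_le_elog_inv_l1_dist[OF assms(1,2)] \<open>0 \<le> E\<close> unfolding E_def[symmetric]
    by (auto elim!: order_trans intro!: ereal_mult_left_mono)
  also have "\<dots> \<le> E * (c * a + c * b)"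
    using l1_dist_le_sqrt_min_KL[OF assms(1,3)] l1_dist_le_sqrt_min_KL[OF assms(2,3)] \<open>0 \<le> E\<close>
    unfolding a_def b_def c_def by (intro ereal_mult_left_mono add_mono) auto
  also have "\<dots> = E * c * (a + b)"
    using ereal_right_distrib[OF \<open>0 \<le> a\<close> \<open>0 \<le> b\<close>, of c] by (simp add: mult.assoc)
  finally show ?thesis unfolding E_def c_def a_def b_def .
qed

end
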